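(* Let $n\ge 0$ be an integer, $\alpha_0=-\frac{1}{2n+2}$, and for $k\in\mathbb{Z}_+=\{0,1,2,\dots\}$ let $v_k$ be the even eigenfunction $$v_k(t)=c_k\,e^{-\frac{t^{2n+2}}{2n+2}}L^{(\alpha_0)}_{k}\!\left(\frac{t^{2n+2}}{n+1}\right),$$ with $c_k>0$ chosen so that $\|t^{n}v_k\|_{L^2(\mathbb{R})}=1$. Then for every $k$ the function $v_k$ belongs to the Gel'fand–Shilov space $S^{\frac{1}{2n+2}}_{\frac{2n+1}{2n+2}}(\mathbb{R})$, and moreover there is a constant $C_v>0$ independent of $k,\alpha,\beta$ such that for all $\alpha,\beta\in\mathbb{Z}_+$ and $t\in\mathbb{R}$ $$|t^{\alpha}\partial_t^{\beta}v_k(t)|\le C_v^{\,k+\alpha+\beta+1}\,\alpha!^{\frac{1}{2n+2}}\,\beta!^{\frac{2n+1}{2n+2}}.$$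
   Context: $L^{(a)}_k$ denotes the generalized Laguerre polynomial of degree $k$ and parameter $a$. The functions $v_k$ satisfy $-v_k''+t^{2(2n+1)}v_k=E_k t^{2n}v_k$ with $E_k=4k(n+1)+2n+1$. For $a,b>0$, $S^{a}_{b}(\mathbb{R})$ denotes the set of $f\in C^\infty(\mathbb{R})$ for which there are constants $C,A,B>0$ with $|t^{k}f^{(q)}(t)|\le C A^{k}B^{q}k^{ak}q^{bq}$ for all $k,q\in\mathbb{Z}_+$, $t\in\mathbb{R}$. *)

theory Defs
  imports "HOL-Analysis.Analysis"
begin

definition laguerre :: "real \<Rightarrow> nat \<Rightarrow> real \<Rightarrow> real" where
  "laguerre a k x = (\<Sum>i\<le>k. (-1)^i * ((real k + a) gchoose (k - i)) * x^i / fact i)"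

definition alpha0 :: "nat \<Rightarrow> real" where
  "alpha0 n = - 1 / (2 * real n + 2)"

definition u_fun :: "nat \<Rightarrow> nat \<Rightarrow> real \<Rightarrow> real" where
  "u_fun n k t = exp (- (t ^ (2*n+2)) / (2 * real n + 2))
                 * laguerre (alpha0 n) k (t ^ (2*n+2) / (real n + 1))"

definition c_const :: "nat \<Rightarrow> nat \<Rightarrow> real" where
  "c_const n k = 1 / sqrt (integral\<^sup>L lborel (\<lambda>t. (t ^ n * u_fun n k t)^2))"

definition v_fun :: "nat \<Rightarrow> nat \<Rightarrow> real \<Rightarrow> real" where
  "v_fun n k t = c_const n k * u_fun n k t"

definition selfpow :: "nat \<Rightarrow> real \<Rightarrow> real" where
  "selfpow k a = (if k = 0 then 1 else real k powr (a * real k))"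

definition smooth_real :: "(real \<Rightarrow> real) \<Rightarrow> bool" where
  "smooth_real f \<longleftrightarrow> (\<forall>q t. ((deriv ^^ q) f) differentiable (at t))"

definition gelfand_shilov :: "real \<Rightarrow> real \<Rightarrow> (real \<Rightarrow> real) set" where
  "gelfand_shilov a b = {f. smooth_real f \<and>
     (\<exists>C A B. C > 0 \<and> A > 0 \<and> B > 0 \<and>
       (\<forall>k q t. \<bar>t ^ k * (deriv ^^ q) f t\<bar> \<le> C * A ^ k * B ^ q * selfpow k a * selfpow q b))}"

end

theory Submission
  imports Defs "HOL-Computational_Algebra.Polynomial"
begin

text \<open>
  Write v_k = c_k P_k W with W(t) = exp(-t^(2n+2)/(2n+2)) and P_k a polynomial in t^(2n+2) of
  degree k. Since W' = -t^(2n+1) W, derivatives of p W are again polynomials times W, namely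
  (p W)' = (p' - t^(2n+1) p) W. Starting from t^j, beta such steps give a polynomial of degree
  D = j + (2n+1) beta whose coefficients satisfy |c_r| a^r \<le> 2^beta a^D as soon as
  a^(2n+2) \<ge> D, while |t|^N W(t) \<le> (N!)^(1/(2n+2)) \<le> a^N for N \<le> a^(2n+2).
  Taking a^(2n+2) = D + alpha + 1 and using y^N \<le> e^y N! turns a^(D+alpha) into
  alpha!^(1/(2n+2)) beta!^((2n+1)/(2n+2)) up to geometric factors. The Laguerre coefficients and
  c_k grow at most exponentially in k; for c_k this follows from a lower bound on u_k near 0,
  where the Laguerre polynomial is close to its constant term binom(k + alpha0, k) \<ge> 2^(-k).
\<close>

lemma pow_le_exp_mult_fact:
  fixes y :: real
  assumes "0 \<le> y"
  shows "y ^ N \<le> exp y * fact N"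
proof -
  have "(\<lambda>m. y ^ m /\<^sub>R fact m) sums exp y"
    by (rule exp_converges)
  then have "y ^ N /\<^sub>R fact N \<le> exp y"
    using sum_le_suminf[of "\<lambda>m. y ^ m /\<^sub>R fact m" "{N}"] assms by (auto simp: sums_iff)
  then show ?thesis
    by (simp add: divide_simps mult.commute)
qed

lemma two_le_exp_one: "2 \<le> exp (1::real)"
  using exp_ge_add_one_self[of 1] by simp

lemma powr_pow_le_exp_mult_fact_powr:
  fixes L c :: real
  assumes "0 \<le> L" "0 \<le> c" "c \<le> 1"
  shows "(L ^ N) powr c \<le> exp L * fact N powr c"
proof -
  have "(L ^ N) powr c \<le> (exp L * fact N) powr c"
    using assms pow_le_exp_mult_fact[of L N] by (intro powr_mono2) auto
  also have "\<dots> = exp (c * L) * fact N powr c"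
    by (simp add: powr_mult powr_def[of "exp L"])
  also have "\<dots> \<le> exp L * fact N powr c"
    using assms by (intro mult_right_mono) (auto simp: mult_left_le_one_le)
  finally show ?thesis .
qed

section \<open>Derivatives of polynomials times the weight\<close>

definition weight :: "nat \<Rightarrow> real \<Rightarrow> real" where
  "weight n t = exp (- (t ^ (2*n+2)) / (2 * real n + 2))"

lemma weight_pos: "0 < weight n t"
  by (simp add: weight_def)

definition weight_pderiv :: "nat \<Rightarrow> real poly \<Rightarrow> real poly" where
  "weight_pderiv n p = pderiv p - monom 1 (2*n+1) * p"

lemma has_real_derivative_weight:
  "(weight n has_real_derivative - (t ^ (2*n+1)) * weight n t) (at t)"
proof -
  have "((\<lambda>t. t ^ (2*n+2)) has_real_derivative real (2*n+2) * t ^ (2*n+1)) (at t)"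
    using DERIV_pow[of "2*n+2" t] by simp
  then have "((\<lambda>t. - (t ^ (2*n+2)) / (2 * real n + 2)) has_real_derivative
      - (real (2*n+2) * t ^ (2*n+1)) / (2 * real n + 2)) (at t)"
    by (intro DERIV_cdivide DERIV_minus)
  moreover have "- (real (2*n+2) * t ^ (2*n+1)) / (2 * real n + 2) = - (t ^ (2*n+1))"
    by (simp add: field_simps)
  ultimately have "((\<lambda>t. - (t ^ (2*n+2)) / (2 * real n + 2)) has_real_derivative - (t ^ (2*n+1))) (at t)"
    by simp
  from DERIV_exp[THEN DERIV_chain2, OF this] show ?thesis
    unfolding weight_def by (simp add: mult.commute)
qed

lemma has_real_derivative_poly_weight:
  "((\<lambda>t. poly p t * weight n t) has_real_derivative poly (weight_pderiv n p) t * weight n t) (at t)"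
  unfolding weight_pderiv_def
  by (auto intro!: derivative_eq_intros has_real_derivative_weight simp: poly_monom algebra_simps)

lemma higher_deriv_poly_weight:
  "(deriv ^^ q) (\<lambda>t. poly p t * weight n t) = (\<lambda>t. poly ((weight_pderiv n ^^ q) p) t * weight n t)"
  by (induction q) (auto intro!: DERIV_imp_deriv has_real_derivative_poly_weight)

lemma smooth_real_poly_weight: "smooth_real (\<lambda>t. poly p t * weight n t)"
  unfolding smooth_real_def higher_deriv_poly_weight real_differentiable_def
  using has_real_derivative_poly_weight by blast

lemma weight_pderiv_iter_sum:
  "(weight_pderiv n ^^ q) (\<Sum>i\<in>A. smult (b i) (p i)) = (\<Sum>i\<in>A. smult (b i) ((weight_pderiv n ^^ q) (p i)))"
proof (induction q)
  case (Suc q)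
  have add: "weight_pderiv n (p + r) = weight_pderiv n p + weight_pderiv n r" for p r
    by (simp add: weight_pderiv_def pderiv_add algebra_simps)
  have smult: "weight_pderiv n (smult c p) = smult c (weight_pderiv n p)" for c p
    by (simp add: weight_pderiv_def pderiv_smult smult_diff_right mult_smult_right)
  have zero: "weight_pderiv n 0 = 0"
    by (simp add: weight_pderiv_def)
  have "weight_pderiv n (\<Sum>i\<in>A. smult (b i) (r i)) = (\<Sum>i\<in>A. smult (b i) (weight_pderiv n (r i)))" for r
    by (induction A rule: infinite_finite_induct) (simp_all add: add smult zero)
  then show ?case using Suc by simp
qed simp

lemma coeff_weight_pderiv:
  "coeff (weight_pderiv n p) r
     = real (Suc r) * coeff p (Suc r) - (if r < 2*n+1 then 0 else coeff p (r - (2*n+1)))"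
  by (simp add: weight_pderiv_def coeff_pderiv coeff_monom_mult)

lemma degree_weight_pderiv_iter_le:
  "degree ((weight_pderiv n ^^ q) p) \<le> degree p + (2*n+1) * q"
proof (induction q)
  case (Suc q)
  have step: "degree (weight_pderiv n r) \<le> degree r + (2*n+1)" for r :: "real poly"
  proof -
    have "degree (monom 1 (2*n+1) * r) \<le> degree r + (2*n+1)"
      using degree_mult_le[of "monom 1 (2*n+1)" r] degree_monom_le[of "1::real" "2*n+1"] by linarith
    then show ?thesis
      unfolding weight_pderiv_def by (intro degree_diff_le) (auto simp: degree_pderiv)
  qed
  have "degree ((weight_pderiv n ^^ Suc q) p) \<le> degree ((weight_pderiv n ^^ q) p) + (2*n+1)"
    using step by simp
  then show ?case
    using Suc by simp
qed simp

lemma coeff_weight_pderiv_bound: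
  fixes a K :: real
  assumes a: "0 \<le> a" and deg: "degree p \<le> d" and d: "real d \<le> a ^ (2*n+2)"
    and bound: "\<And>r. \<bar>coeff p r\<bar> * a ^ r \<le> K * a ^ d"
  shows "\<bar>coeff (weight_pderiv n p) r\<bar> * a ^ r \<le> 2 * K * a ^ (d + (2*n+1))"
proof -
  have shift: "\<bar>coeff p s\<bar> * a ^ (s + (2*n+1)) \<le> K * a ^ (d + (2*n+1))" for s
  proof -
    have "\<bar>coeff p s\<bar> * a ^ s * a ^ (2*n+1) \<le> K * a ^ d * a ^ (2*n+1)"
      using bound a by (intro mult_right_mono) auto
    then show ?thesis
      by (simp only: power_add mult.assoc)
  qed
  have K: "0 \<le> K * a ^ (d + (2*n+1))"
    using shift[of 0] a by (meson abs_ge_zero mult_nonneg_nonneg order_trans zero_le_power)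
  have deriv_term: "real (Suc r) * \<bar>coeff p (Suc r)\<bar> * a ^ r \<le> K * a ^ (d + (2*n+1))"
  proof (cases "Suc r \<le> d")
    case True
    then have "real (Suc r) \<le> a ^ (2*n+2)"
      using d by linarith
    then have "real (Suc r) * \<bar>coeff p (Suc r)\<bar> * a ^ r \<le> \<bar>coeff p (Suc r)\<bar> * a ^ (Suc r + (2*n+1))"
      using a mult_right_mono[of "real (Suc r)" "a ^ (2*n+2)" "\<bar>coeff p (Suc r)\<bar> * a ^ r"]
      by (simp add: power_add algebra_simps)
    then show ?thesis
      using shift[of "Suc r"] by linarith
  next
    case False
    then have "coeff p (Suc r) = 0"
      using deg by (intro coeff_eq_0) simp
    then show ?thesis
      using K a by simp
  qed
  have mult_term: "(if r < 2*n+1 then 0 else \<bar>coeff p (r - (2*n+1))\<bar>) * a ^ r \<le> K * a ^ (d + (2*n+1))"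
    using shift[of "r - (2*n+1)"] K by (cases "r < 2*n+1") (simp_all del: power_Suc)
  have "\<bar>coeff (weight_pderiv n p) r\<bar>
      \<le> real (Suc r) * \<bar>coeff p (Suc r)\<bar> + (if r < 2*n+1 then 0 else \<bar>coeff p (r - (2*n+1))\<bar>)"
    unfolding coeff_weight_pderiv by (auto simp: abs_mult intro: order_trans[OF abs_triangle_ineq4])
  from mult_right_mono[OF this, of "a ^ r"] show ?thesis
    using a deriv_term mult_term by (simp add: distrib_right)
qed

lemma coeff_weight_pderiv_iter_bound:
  fixes a K :: real
  assumes a: "0 \<le> a" and deg: "degree p \<le> d" and d: "real (d + (2*n+1) * q) \<le> a ^ (2*n+2)"
    and bound: "\<And>r. \<bar>coeff p r\<bar> * a ^ r \<le> K * a ^ d"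
  shows "\<bar>coeff ((weight_pderiv n ^^ q) p) r\<bar> * a ^ r \<le> 2 ^ q * K * a ^ (d + (2*n+1) * q)"
  using d
proof (induction q arbitrary: r)
  case 0
  then show ?case using bound by simp
next
  case (Suc q)
  have "\<bar>coeff (weight_pderiv n ((weight_pderiv n ^^ q) p)) r\<bar> * a ^ r
      \<le> 2 * (2 ^ q * K) * a ^ (d + (2*n+1) * q + (2*n+1))"
  proof (rule coeff_weight_pderiv_bound[OF a])
    show "degree ((weight_pderiv n ^^ q) p) \<le> d + (2*n+1) * q"
      using degree_weight_pderiv_iter_le[where n=n and q=q and p=p] deg by linarith
    have "real (d + (2*n+1) * q) \<le> real (d + (2*n+1) * Suc q)"
      by simp
    then show "real (d + (2*n+1) * q) \<le> a ^ (2*n+2)"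
      using Suc.prems by linarith
    then show "\<bar>coeff ((weight_pderiv n ^^ q) p) s\<bar> * a ^ s \<le> 2 ^ q * K * a ^ (d + (2*n+1) * q)" for s
      by (rule Suc.IH)
  qed
  then show ?case
    by (simp add: algebra_simps)
qed

lemma abs_pow_mult_weight_le:
  fixes a t :: real
  assumes a: "0 \<le> a" and N: "real N \<le> a ^ (2*n+2)"
  shows "\<bar>t\<bar> ^ N * weight n t \<le> a ^ N"
proof (rule power_le_imp_le_base)
  define y where "y = \<bar>t\<bar> ^ (2*n+2)"
  have t_y: "t ^ (2*n+2) = y"
    unfolding y_def by (rule power_even_abs[symmetric]) simp
  have "weight n t ^ (2*n+2) = exp (real (2*n+2) * (- (t ^ (2*n+2)) / (2 * real n + 2)))"
    unfolding weight_def by (rule exp_of_nat_mult[symmetric])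
  also have "\<dots> = exp (- y)"
    unfolding t_y by (simp add: field_simps)
  finally have "(\<bar>t\<bar> ^ N * weight n t) ^ Suc (2*n+1) = y ^ N * exp (- y)"
    by (simp add: y_def power_mult_distrib power_mult[symmetric] mult.commute)
  also have "\<dots> \<le> fact N"
    using pow_le_exp_mult_fact[of y N] by (simp add: y_def exp_minus field_simps)
  also have "\<dots> \<le> real N ^ N"
    using fact_le_power[of N] by simp
  also have "\<dots> \<le> (a ^ (2*n+2)) ^ N"
    using N by (intro power_mono) auto
  also have "\<dots> = (a ^ N) ^ Suc (2*n+1)"
    by (simp only: power_mult[symmetric] mult.commute Suc_eq_plus1 add.assoc one_add_one)
  finally show "(\<bar>t\<bar> ^ N * weight n t) ^ Suc (2*n+1) \<le> (a ^ N) ^ Suc (2*n+1)" .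
qed (use a in simp)

lemma abs_pow_mult_poly_weight_pderiv_iter_monom_le:
  fixes a t :: real
  assumes a: "0 \<le> a" and N: "real (j + (2*n+1) * \<beta> + \<alpha>) \<le> a ^ (2*n+2)"
  shows "\<bar>t ^ \<alpha> * (poly ((weight_pderiv n ^^ \<beta>) (monom 1 j)) t * weight n t)\<bar>
     \<le> real (j + (2*n+1) * \<beta> + 1) * 2 ^ \<beta> * a ^ (j + (2*n+1) * \<beta> + \<alpha>)"
proof -
  define q where "q = (weight_pderiv n ^^ \<beta>) (monom (1::real) j)"
  define D where "D = j + (2*n+1) * \<beta>"
  have deg: "degree q \<le> D"
    using degree_weight_pderiv_iter_le[where p="monom 1 j"] degree_monom_le[of "1::real" j]
    unfolding q_def D_def by (meson add_le_mono1 order_trans)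
  have monom_bound: "\<bar>coeff (monom (1::real) j) s\<bar> * a ^ s \<le> 1 * a ^ j" for s
    using a by (simp add: coeff_monom)
  have "real (j + (2*n+1) * \<beta>) \<le> a ^ (2*n+2)"
    using N by simp
  from coeff_weight_pderiv_iter_bound[OF a degree_monom_le this monom_bound]
  have coeff: "\<bar>coeff q r\<bar> * a ^ r \<le> 2 ^ \<beta> * a ^ D" for r
    unfolding q_def D_def by simp
  have term_bound: "\<bar>coeff q r * t ^ r * (t ^ \<alpha> * weight n t)\<bar> \<le> 2 ^ \<beta> * a ^ (D + \<alpha>)"
    if "r \<le> D" for r
  proof -
    have "real (r + \<alpha>) \<le> real (D + \<alpha>)"
      using that by simp
    then have weight_bound: "\<bar>t\<bar> ^ (r + \<alpha>) * weight n t \<le> a ^ (r + \<alpha>)"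
      using N unfolding D_def by (intro abs_pow_mult_weight_le a) linarith
    have "\<bar>coeff q r * t ^ r * (t ^ \<alpha> * weight n t)\<bar> = \<bar>coeff q r\<bar> * (\<bar>t\<bar> ^ (r + \<alpha>) * weight n t)"
      by (simp add: abs_mult power_abs power_add abs_of_pos[OF weight_pos])
    also have "\<dots> \<le> \<bar>coeff q r\<bar> * a ^ r * a ^ \<alpha>"
      using mult_left_mono[OF weight_bound abs_ge_zero] by (simp add: power_add mult.assoc)
    also have "\<dots> \<le> 2 ^ \<beta> * a ^ D * a ^ \<alpha>"
      using coeff a by (intro mult_right_mono) auto
    finally show ?thesis
      by (simp add: power_add mult.assoc)
  qed
  have "\<bar>t ^ \<alpha> * (poly q t * weight n t)\<bar> = \<bar>\<Sum>r\<le>degree q. coeff q r * t ^ r * (t ^ \<alpha> * weight n t)\<bar>"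
    unfolding poly_altdef sum_distrib_right sum_distrib_left by (simp add: mult_ac)
  also have "\<dots> \<le> (\<Sum>r\<le>degree q. \<bar>coeff q r * t ^ r * (t ^ \<alpha> * weight n t)\<bar>)"
    by (rule sum_abs)
  also have "\<dots> \<le> (\<Sum>r\<le>degree q. 2 ^ \<beta> * a ^ (D + \<alpha>))"
    using deg term_bound by (intro sum_mono) auto
  also have "\<dots> \<le> real (D + 1) * 2 ^ \<beta> * a ^ (D + \<alpha>)"
    using deg a by (simp add: mult_right_mono)
  finally show ?thesis
    by (simp add: q_def D_def)
qed

lemma powr_le_exp_mult_fact_powrs:
  fixes L :: real
  assumes L: "1 \<le> L"
  shows "L powr (real ((2*n+2) * i + (2*n+1) * \<beta> + \<alpha>) / (2 * real n + 2))
     \<le> exp (3 * L) * fact i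
        * (fact \<alpha> powr (1 / (2 * real n + 2)) * fact \<beta> powr ((2 * real n + 1) / (2 * real n + 2)))"
proof -
  define M where "M = 2 * real n + 2"
  have M: "0 < M"
    by (simp add: M_def)
  have "real ((2*n+2) * i + (2*n+1) * \<beta> + \<alpha>) = M * real i + real \<beta> * (2 * real n + 1) + real \<alpha>"
    by (simp add: M_def algebra_simps)
  then have "real ((2*n+2) * i + (2*n+1) * \<beta> + \<alpha>) / M
      = real i + real \<beta> * ((2 * real n + 1) / M) + real \<alpha> * (1 / M)"
    using M by (simp add: field_simps)
  then have "L powr (real ((2*n+2) * i + (2*n+1) * \<beta> + \<alpha>) / M)
      = L ^ i * (L ^ \<beta>) powr ((2 * real n + 1) / M) * (L ^ \<alpha>) powr (1 / M)"
    using L by (simp add: powr_add powr_realpow[symmetric] powr_powr)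
  also have "\<dots> \<le> (exp L * fact i) * (exp L * fact \<beta> powr ((2 * real n + 1) / M))
      * (exp L * fact \<alpha> powr (1 / M))"
    using L M by (intro mult_mono powr_pow_le_exp_mult_fact_powr pow_le_exp_mult_fact) (auto simp: M_def)
  also have "\<dots> = exp (3 * L) * fact i * (fact \<alpha> powr (1 / M) * fact \<beta> powr ((2 * real n + 1) / M))"
    by (simp add: exp_add[symmetric] mult_ac)
  finally show ?thesis
    by (simp add: M_def)
qed

lemma abs_pow_mult_poly_weight_pderiv_iter_monom_fact_le:
  fixes t :: real
  shows "\<bar>t ^ \<alpha> * (poly ((weight_pderiv n ^^ \<beta>) (monom 1 ((2*n+2) * i))) t * weight n t)\<bar>
     \<le> exp (10 * (real n + 1)) ^ (i + \<alpha> + \<beta> + 1) * fact i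
        * (fact \<alpha> powr (1 / (2 * real n + 2)) * fact \<beta> powr ((2 * real n + 1) / (2 * real n + 2)))"
proof -
  define F where "F = fact \<alpha> powr (1 / (2 * real n + 2)) * fact \<beta> powr ((2 * real n + 1) / (2 * real n + 2))"
  define D where "D = (2*n+2) * i + (2*n+1) * \<beta>"
  define L where "L = real (D + \<alpha>) + 1"
  define a where "a = L powr (1 / (2 * real n + 2))"
  have L: "1 \<le> L"
    by (simp add: L_def)
  have pow_a: "a ^ k = L powr (real k / (2 * real n + 2))" for k
    using L by (simp add: a_def powr_power)
  have "\<bar>t ^ \<alpha> * (poly ((weight_pderiv n ^^ \<beta>) (monom 1 ((2*n+2) * i))) t * weight n t)\<bar>
      \<le> real (D + 1) * 2 ^ \<beta> * a ^ (D + \<alpha>)"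
  proof (unfold D_def, rule abs_pow_mult_poly_weight_pderiv_iter_monom_le)
    show "0 \<le> a"
      by (simp add: a_def)
    have "a ^ (2*n+2) = L"
      using L by (simp only: pow_a) (simp add: add.commute)
    then show "real ((2*n+2) * i + (2*n+1) * \<beta> + \<alpha>) \<le> a ^ (2*n+2)"
      by (simp add: L_def D_def)
  qed
  also have "\<dots> \<le> exp L * exp L * (exp (3 * L) * fact i * F)"
  proof (intro mult_mono)
    show "real (D + 1) \<le> exp L"
      using exp_ge_add_one_self[of L] by (simp add: L_def)
    have "(2::real) ^ \<beta> \<le> exp 1 ^ \<beta>"
      using two_le_exp_one by (intro power_mono) auto
    also have "\<dots> \<le> exp L"
      by (simp add: exp_of_nat_mult[symmetric] L_def D_def)
    finally show "(2::real) ^ \<beta> \<le> exp L" .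
    show "a ^ (D + \<alpha>) \<le> exp (3 * L) * fact i * F"
      unfolding pow_a D_def F_def using L by (rule powr_le_exp_mult_fact_powrs)
  qed (simp_all add: a_def)
  also have "\<dots> = exp (5 * L) * fact i * F"
    by (simp add: exp_add[symmetric] mult_ac)
  also have "exp (5 * L) \<le> exp (10 * (real n + 1)) ^ (i + \<alpha> + \<beta> + 1)"
  proof -
    have "5 * L \<le> real (i + \<alpha> + \<beta> + 1) * (10 * (real n + 1))"
      by (simp add: L_def D_def algebra_simps)
    then have "exp (5 * L) \<le> exp (real (i + \<alpha> + \<beta> + 1) * (10 * (real n + 1)))"
      by (simp only: exp_le_cancel_iff)
    then show ?thesis
      by (simp only: exp_of_nat_mult)
  qed
  finally show ?thesis
    by (simp add: F_def mult_right_mono)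
qed

section \<open>Laguerre polynomials near zero and the normalising constant\<close>

lemma abs_gbinomial_le_exp:
  fixes x :: real
  shows "\<bar>x gchoose r\<bar> \<le> exp (\<bar>x\<bar> + real r)"
proof -
  have "\<bar>\<Prod>l=0..<r. x - real l\<bar> = (\<Prod>l=0..<r. \<bar>x - real l\<bar>)"
    by (rule abs_prod)
  also have "\<dots> \<le> (\<Prod>l=0..<r. \<bar>x\<bar> + real r)"
    by (rule prod_mono) auto
  finally have "\<bar>x gchoose r\<bar> \<le> (\<bar>x\<bar> + real r) ^ r / fact r"
    by (simp add: gbinomial_prod_rev divide_right_mono)
  also have "\<dots> \<le> exp (\<bar>x\<bar> + real r)"
    using pow_le_exp_mult_fact[of "\<bar>x\<bar> + real r" r] by (simp add: divide_le_eq)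
  finally show ?thesis .
qed

lemma half_pow_le_gbinomial:
  fixes a :: real
  assumes "- 1/2 \<le> a"
  shows "(1/2) ^ k \<le> (real k + a) gchoose k"
proof -
  have "(1/2::real) ^ k = (\<Prod>i=0..<k. 1/2)"
    by simp
  also have "\<dots> \<le> (\<Prod>i=0..<k. (real k + a - real i) / real (k - i))"
  proof (rule prod_mono)
    fix i assume "i \<in> {0..<k}"
    then have "1 \<le> real (k - i)" and "real (k - i) = real k - real i"
      by auto
    then show "0 \<le> (1::real)/2 \<and> 1/2 \<le> (real k + a - real i) / real (k - i)"
      using assms by (simp add: field_simps)
  qed
  also have "\<dots> = (real k + a) gchoose k"
    by (simp add: gbinomial_altdef_of_nat)
  finally show ?thesis .
qed

lemma abs_laguerre_minus_gbinomial_le: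
  fixes x :: real
  assumes x: "0 \<le> x" "x \<le> 1"
  shows "\<bar>laguerre a k x - ((real k + a) gchoose k)\<bar> \<le> real k * exp (\<bar>real k + a\<bar> + real k) * x"
proof -
  define f where "f i = (-1)^i * ((real k + a) gchoose (k - i)) * x^i / fact i" for i
  have split: "laguerre a k x = f 0 + (\<Sum>i<k. f (Suc i))"
    unfolding laguerre_def f_def by (rule sum.atMost_shift)
  have leading: "f 0 = (real k + a) gchoose k"
    by (simp add: f_def)
  have tail: "\<bar>f (Suc i)\<bar> \<le> exp (\<bar>real k + a\<bar> + real k) * x" for i
  proof -
    have "\<bar>f (Suc i)\<bar> = \<bar>(real k + a) gchoose (k - Suc i)\<bar> * (x ^ Suc i / fact (Suc i))"
      using x by (simp add: f_def abs_mult)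
    also have "\<dots> \<le> exp (\<bar>real k + a\<bar> + real k) * x"
    proof (rule mult_mono)
      show "\<bar>(real k + a) gchoose (k - Suc i)\<bar> \<le> exp (\<bar>real k + a\<bar> + real k)"
        by (rule order_trans[OF abs_gbinomial_le_exp]) simp
      have "x ^ Suc i / fact (Suc i) \<le> x ^ Suc i / 1"
        using x fact_ge_1[of "Suc i", where 'a=real] by (intro divide_left_mono) (auto simp del: fact_Suc)
      also have "\<dots> \<le> x"
        using x by (simp add: power_le_one mult_left_le)
      finally show "x ^ Suc i / fact (Suc i) \<le> x" .
    qed (use x in auto)
    finally show ?thesis .
  qed
  have "\<bar>\<Sum>i<k. f (Suc i)\<bar> \<le> (\<Sum>i<k. \<bar>f (Suc i)\<bar>)"
    by (rule sum_abs)
  also have "\<dots> \<le> (\<Sum>i<k. exp (\<bar>real k + a\<bar> + real k) * x)"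
    by (rule sum_mono) (rule tail)
  finally show ?thesis
    by (simp add: split leading)
qed

lemma alpha0_bounds: "- 1/2 \<le> alpha0 n" "alpha0 n \<le> 0"
  by (auto simp: alpha0_def field_simps)

lemma laguerre_alpha0_ge:
  fixes x :: real
  assumes x: "0 \<le> x" "x \<le> exp (- (4 * real k + 2))"
  shows "exp (- real k) / 2 \<le> laguerre (alpha0 n) k x"
proof -
  have "exp (- real k) = exp (-1) ^ k"
    by (simp add: exp_of_nat_mult[symmetric])
  also have "\<dots> \<le> (1/2) ^ k"
    using two_le_exp_one by (intro power_mono) (auto simp: exp_minus field_simps)
  also have "\<dots> \<le> (real k + alpha0 n) gchoose k"
    by (rule half_pow_le_gbinomial[OF alpha0_bounds(1)])
  finally have leading: "exp (- real k) \<le> (real k + alpha0 n) gchoose k" .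
  have "\<bar>real k + alpha0 n\<bar> + real k \<le> 2 * real k + 1"
    using alpha0_bounds[of n] by linarith
  moreover have "x \<le> 1"
    using x(2) by (simp add: order.trans[OF _ exp_le_one_iff[THEN iffD2]])
  ultimately have "\<bar>laguerre (alpha0 n) k x - ((real k + alpha0 n) gchoose k)\<bar>
      \<le> real k * exp (\<bar>real k + alpha0 n\<bar> + real k) * x"
    using abs_laguerre_minus_gbinomial_le x(1) by blast
  also have "\<dots> \<le> real k * exp (2 * real k + 1) * exp (- (4 * real k + 2))"
    using \<open>\<bar>real k + alpha0 n\<bar> + real k \<le> 2 * real k + 1\<close> x by (intro mult_mono) auto
  also have "\<dots> \<le> exp (real k - 1) * exp (2 * real k + 1) * exp (- (4 * real k + 2))"
    using exp_ge_add_one_self[of "real k - 1"] by (intro mult_right_mono) auto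
  also have "\<dots> = exp (- real k) * exp (-2)"
    by (simp add: exp_add[symmetric])
  also have "\<dots> \<le> exp (- real k) / 2"
    using exp_ge_add_one_self[of "2::real"] by (simp add: exp_minus field_simps)
  finally show ?thesis
    using leading by linarith
qed

lemma u_fun_eq: "u_fun n k t = weight n t * laguerre (alpha0 n) k (t ^ (2*n+2) / (real n + 1))"
  by (simp add: u_fun_def weight_def)

lemma u_fun_ge:
  fixes t :: real
  assumes t: "0 \<le> t" "t \<le> exp (- (4 * real k + 2))"
  shows "exp (- (real k + 2)) \<le> u_fun n k t"
proof -
  have "t \<le> 1"
    using t(2) by (simp add: order.trans[OF _ exp_le_one_iff[THEN iffD2]])
  then have t_pow: "0 \<le> t ^ (2*n+2)" "t ^ (2*n+2) \<le> t"
    using t(1) power_decreasing[of 1 "2*n+2" t] by auto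
  have "t ^ (2*n+2) / (real n + 1) \<le> t ^ (2*n+2)"
    using t_pow(1) by (simp add: divide_le_eq mult_le_cancel_left1)
  then have "exp (- real k) / 2 \<le> laguerre (alpha0 n) k (t ^ (2*n+2) / (real n + 1))"
    using t t_pow by (intro laguerre_alpha0_ge) auto
  moreover have "exp (-1) \<le> weight n t"
    using t_pow \<open>t \<le> 1\<close> by (simp add: weight_def divide_le_eq)
  ultimately have "exp (-1) * (exp (- real k) / 2) \<le> u_fun n k t"
    unfolding u_fun_eq using weight_pos[of n t] by (intro mult_mono) auto
  moreover have "exp (- (real k + 2)) \<le> exp (-1) * (exp (- real k) / 2)"
  proof -
    have "exp (- (real k + 2)) = exp (-1) * (exp (- real k) * exp (-1))"
      by (simp add: exp_add[symmetric])
    also have "\<dots> \<le> exp (-1) * (exp (- real k) / 2)"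
      using two_le_exp_one by (intro mult_left_mono) (auto simp: exp_minus field_simps)
    finally show ?thesis .
  qed
  ultimately show ?thesis
    by linarith
qed

lemma integral_square_u_fun_ge:
  assumes int: "integrable lborel (\<lambda>t. (t ^ n * u_fun n k t)\<^sup>2)"
  shows "exp (- (8 * (real n + 1) * (real k + 1))) \<le> (\<integral>t. (t ^ n * u_fun n k t)\<^sup>2 \<partial>lborel)"
proof -
  define d :: real where "d = exp (- (4 * real k + 3))"
  define B :: real where "B = (d ^ n * exp (- (real k + 2)))\<^sup>2"
  have d: "0 < d" "2 * d \<le> exp (- (4 * real k + 2))"
  proof -
    have "2 * d = 2 * exp (-1) * exp (- (4 * real k + 2))"
      by (simp add: d_def exp_add[symmetric])
    also have "\<dots> \<le> exp (- (4 * real k + 2))"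
      using two_le_exp_one by (simp add: exp_minus field_simps)
    finally show "2 * d \<le> exp (- (4 * real k + 2))" .
  qed (simp add: d_def)
  have "B * indicator {d..2*d} t \<le> (t ^ n * u_fun n k t)\<^sup>2" for t :: real
  proof (cases "t \<in> {d..2*d}")
    case True
    then have "exp (- (real k + 2)) \<le> u_fun n k t"
      using d by (intro u_fun_ge) auto
    then have "B \<le> (t ^ n * u_fun n k t)\<^sup>2"
      unfolding B_def using True d by (intro power_mono mult_mono) auto
    then show ?thesis
      using True by simp
  qed simp
  then have "(\<integral>t. B * indicator {d..2*d} t \<partial>lborel) \<le> (\<integral>t. (t ^ n * u_fun n k t)\<^sup>2 \<partial>lborel)"
    by (intro integral_mono' int) auto
  moreover have "(\<integral>t. B * indicator {d..2*d} t \<partial>lborel) = B * d"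
    using d by (simp add: integral_indicator)
  moreover have "exp (- (8 * (real n + 1) * (real k + 1))) \<le> B * d"
  proof -
    have "B * d = exp (- ((4 * real k + 3) * (2 * real n + 1) + (2 * real k + 4)))"
      by (simp add: B_def d_def power_mult_distrib power_mult[symmetric] exp_of_nat_mult[symmetric]
          exp_add[symmetric] algebra_simps)
    then show ?thesis
      by (simp add: algebra_simps)
  qed
  ultimately show ?thesis
    by linarith
qed

lemma c_const_nonneg: "0 \<le> c_const n k"
  unfolding c_const_def by (simp add: integral_nonneg_AE)

lemma c_const_le: "c_const n k \<le> exp (4 * (real n + 1) * (real k + 1))"
proof (cases "integrable lborel (\<lambda>t. (t ^ n * u_fun n k t)\<^sup>2)")
  case True
  define a where "a = 4 * (real n + 1) * (real k + 1)"
  have "exp (- (2 * a)) = (exp (- a))\<^sup>2"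
    by (simp add: power2_eq_square exp_add[symmetric])
  then have "exp (- a) = sqrt (exp (- (2 * a)))"
    by simp
  also have "\<dots> \<le> sqrt (\<integral>t. (t ^ n * u_fun n k t)\<^sup>2 \<partial>lborel)"
    using integral_square_u_fun_ge[OF True] by (simp add: a_def algebra_simps)
  finally have sqrt_ge: "exp (- a) \<le> sqrt (\<integral>t. (t ^ n * u_fun n k t)\<^sup>2 \<partial>lborel)" .
  then have "0 < sqrt (\<integral>t. (t ^ n * u_fun n k t)\<^sup>2 \<partial>lborel)"
    using exp_gt_zero[of "- a"] by linarith
  then have "1 / sqrt (\<integral>t. (t ^ n * u_fun n k t)\<^sup>2 \<partial>lborel) \<le> 1 / exp (- a)"
    using sqrt_ge by (intro divide_left_mono mult_pos_pos) auto
  then show ?thesis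
    by (simp add: c_const_def a_def exp_minus divide_inverse)
next
  case False
  \<comment> \<open>the integral of a non-integrable function is 0, so c_const n k = 1 / sqrt 0 = 0\<close>
  then show ?thesis
    by (simp add: c_const_def not_integrable_integral_eq)
qed

section \<open>Derivative bounds for the eigenfunctions\<close>

definition u_coeff :: "nat \<Rightarrow> nat \<Rightarrow> nat \<Rightarrow> real" where
  "u_coeff n k i = (-1)^i * ((real k + alpha0 n) gchoose (k - i)) / (fact i * (real n + 1)^i)"

lemma v_fun_eq_poly_weight:
  "v_fun n k = (\<lambda>t. poly (\<Sum>i\<le>k. smult (c_const n k * u_coeff n k i) (monom 1 ((2*n+2) * i))) t * weight n t)"
proof
  fix t :: real
  have "laguerre (alpha0 n) k (t ^ (2*n+2) / (real n + 1)) = (\<Sum>i\<le>k. u_coeff n k i * t ^ ((2*n+2) * i))"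
    unfolding laguerre_def
  proof (rule sum.cong)
    fix i
    have "(t ^ (2*n+2) / (real n + 1)) ^ i = t ^ ((2*n+2) * i) / (real n + 1) ^ i"
      by (simp only: power_mult power_divide)
    then show "(-1)^i * ((real k + alpha0 n) gchoose (k - i)) * (t ^ (2*n+2) / (real n + 1)) ^ i / fact i
        = u_coeff n k i * t ^ ((2*n+2) * i)"
      by (simp add: u_coeff_def)
  qed simp
  then show "v_fun n k t = poly (\<Sum>i\<le>k. smult (c_const n k * u_coeff n k i) (monom 1 ((2*n+2) * i))) t * weight n t"
    by (simp add: v_fun_def u_fun_eq poly_sum poly_monom sum_distrib_left sum_distrib_right mult_ac)
qed

lemma smooth_real_v_fun: "smooth_real (v_fun n k)"
  unfolding v_fun_eq_poly_weight by (rule smooth_real_poly_weight)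

lemma higher_deriv_v_fun:
  "(deriv ^^ \<beta>) (v_fun n k) t = c_const n k *
     (\<Sum>i\<le>k. u_coeff n k i * (poly ((weight_pderiv n ^^ \<beta>) (monom 1 ((2*n+2) * i))) t * weight n t))"
  unfolding v_fun_eq_poly_weight higher_deriv_poly_weight weight_pderiv_iter_sum
  by (simp add: poly_sum sum_distrib_left sum_distrib_right mult_ac)

lemma abs_u_coeff_mult_fact_le:
  assumes "i \<le> k"
  shows "\<bar>u_coeff n k i\<bar> * fact i \<le> exp (2 * real k + 1)"
proof -
  have "\<bar>u_coeff n k i\<bar> * fact i = \<bar>(real k + alpha0 n) gchoose (k - i)\<bar> / (real n + 1) ^ i"
    by (simp add: u_coeff_def abs_mult)
  also have "\<dots> \<le> \<bar>(real k + alpha0 n) gchoose (k - i)\<bar>"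
    by (simp add: divide_le_eq mult_le_cancel_left1)
  also have "\<dots> \<le> exp (\<bar>real k + alpha0 n\<bar> + real (k - i))"
    by (rule abs_gbinomial_le_exp)
  also have "\<dots> \<le> exp (2 * real k + 1)"
    using alpha0_bounds[of n] assms by simp
  finally show ?thesis .
qed

lemma abs_u_coeff_mult_pow_poly_weight_pderiv_iter_le:
  fixes t :: real
  assumes "i \<le> k"
  shows "\<bar>u_coeff n k i * (t ^ \<alpha> * (poly ((weight_pderiv n ^^ \<beta>) (monom 1 ((2*n+2) * i))) t * weight n t))\<bar>
     \<le> exp (2 * real k + 1) * exp (10 * (real n + 1)) ^ (k + \<alpha> + \<beta> + 1)
        * (fact \<alpha> powr (1 / (2 * real n + 2)) * fact \<beta> powr ((2 * real n + 1) / (2 * real n + 2)))"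
proof -
  define K where "K = exp (10 * (real n + 1))"
  define F where "F = fact \<alpha> powr (1 / (2 * real n + 2)) * fact \<beta> powr ((2 * real n + 1) / (2 * real n + 2))"
  have K: "1 \<le> K" and F: "0 \<le> F"
    by (simp_all add: K_def F_def)
  have "\<bar>u_coeff n k i * (t ^ \<alpha> * (poly ((weight_pderiv n ^^ \<beta>) (monom 1 ((2*n+2) * i))) t * weight n t))\<bar>
      \<le> \<bar>u_coeff n k i\<bar> * (K ^ (i + \<alpha> + \<beta> + 1) * fact i * F)"
    unfolding abs_mult[of "u_coeff n k i"] K_def F_def
    by (intro mult_left_mono abs_pow_mult_poly_weight_pderiv_iter_monom_fact_le) simp
  also have "\<dots> \<le> \<bar>u_coeff n k i\<bar> * (K ^ (k + \<alpha> + \<beta> + 1) * fact i * F)"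
    using assms K F by (intro mult_left_mono mult_right_mono power_increasing) auto
  also have "\<dots> = (\<bar>u_coeff n k i\<bar> * fact i) * K ^ (k + \<alpha> + \<beta> + 1) * F"
    by (simp add: mult_ac)
  also have "\<dots> \<le> exp (2 * real k + 1) * K ^ (k + \<alpha> + \<beta> + 1) * F"
    using abs_u_coeff_mult_fact_le[OF assms] K F by (intro mult_right_mono) auto
  finally show ?thesis
    by (simp add: K_def F_def)
qed

lemma abs_pow_mult_higher_deriv_v_fun_le:
  fixes t :: real
  shows "\<bar>t ^ \<alpha> * (deriv ^^ \<beta>) (v_fun n k) t\<bar>
     \<le> exp (14 * real n + 17) ^ (k + \<alpha> + \<beta> + 1)
        * (fact \<alpha> powr (1 / (2 * real n + 2)) * fact \<beta> powr ((2 * real n + 1) / (2 * real n + 2)))"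
proof -
  define K where "K = exp (10 * (real n + 1))"
  define F where "F = fact \<alpha> powr (1 / (2 * real n + 2)) * fact \<beta> powr ((2 * real n + 1) / (2 * real n + 2))"
  define N where "N = k + \<alpha> + \<beta> + 1"
  define g where "g i = u_coeff n k i * (t ^ \<alpha> * (poly ((weight_pderiv n ^^ \<beta>) (monom 1 ((2*n+2) * i))) t * weight n t))" for i
  have K: "1 \<le> K" and F: "0 \<le> F" and c: "0 \<le> c_const n k"
    by (simp_all add: K_def F_def c_const_nonneg)
  have "t ^ \<alpha> * (deriv ^^ \<beta>) (v_fun n k) t = c_const n k * (\<Sum>i\<le>k. g i)"
    by (simp add: higher_deriv_v_fun g_def sum_distrib_left mult_ac)
  then have "\<bar>t ^ \<alpha> * (deriv ^^ \<beta>) (v_fun n k) t\<bar> = c_const n k * \<bar>\<Sum>i\<le>k. g i\<bar>"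
    using c by (simp only: abs_mult abs_of_nonneg)
  also have "\<dots> \<le> c_const n k * (\<Sum>i\<le>k. exp (2 * real k + 1) * K ^ N * F)"
    using c abs_u_coeff_mult_pow_poly_weight_pderiv_iter_le
    by (intro mult_left_mono order_trans[OF sum_abs sum_mono]) (auto simp: g_def K_def F_def N_def)
  also have "\<dots> = c_const n k * ((real k + 1) * exp (2 * real k + 1)) * K ^ N * F"
    by (simp add: mult_ac)
  also have "\<dots> \<le> exp (4 * (real n + 1) * (real k + 1)) * exp (3 * (real k + 1)) * K ^ N * F"
  proof -
    have "(real k + 1) * exp (2 * real k + 1) \<le> exp (real k) * exp (2 * real k + 1)"
      by (intro mult_right_mono) (auto simp: add.commute)
    also have "\<dots> \<le> exp (3 * (real k + 1))"
      by (simp add: exp_add[symmetric])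
    finally show ?thesis
      using c_const_le c K F by (intro mult_right_mono mult_mono) auto
  qed
  also have "\<dots> = exp (4 * real n + 7) ^ (k + 1) * K ^ N * F"
    by (simp add: exp_add[symmetric] exp_of_nat_mult[symmetric] algebra_simps)
  also have "\<dots> \<le> exp (4 * real n + 7) ^ N * K ^ N * F"
    using K F by (intro mult_right_mono power_increasing) (auto simp: N_def)
  also have "\<dots> = exp (14 * real n + 17) ^ N * F"
    by (simp add: K_def power_mult_distrib[symmetric] exp_add[symmetric] algebra_simps)
  finally show ?thesis
    by (simp add: N_def F_def)
qed

lemma fact_powr_le_selfpow:
  fixes c :: real
  assumes "0 \<le> c"
  shows "fact m powr c \<le> selfpow m c"
proof (cases "m = 0")
  case False
  have "fact m powr c \<le> (real m ^ m) powr c"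
    using fact_le_power[of m, where 'a=real] assms by (intro powr_mono2) auto
  also have "\<dots> = selfpow m c"
    using False by (simp add: selfpow_def powr_realpow[symmetric] powr_powr mult.commute)
  finally show ?thesis .
qed (simp add: selfpow_def)

lemma gelfand_shilovI:
  fixes f :: "real \<Rightarrow> real" and a b C A B :: real
  assumes "smooth_real f" "0 \<le> a" "0 \<le> b" "0 < C" "0 < A" "0 < B"
    and bound: "\<And>k q t. \<bar>t ^ k * (deriv ^^ q) f t\<bar> \<le> C * A ^ k * B ^ q * (fact k powr a * fact q powr b)"
  shows "f \<in> gelfand_shilov a b"
  unfolding gelfand_shilov_def mem_Collect_eq
proof (intro conjI exI allI)
  fix k q and t :: real
  have "C * A ^ k * B ^ q * (fact k powr a * fact q powr b) \<le> C * A ^ k * B ^ q * (selfpow k a * selfpow q b)"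
    using assms by (intro mult_left_mono mult_mono fact_powr_le_selfpow) (auto simp: selfpow_def)
  then show "\<bar>t ^ k * (deriv ^^ q) f t\<bar> \<le> C * A ^ k * B ^ q * selfpow k a * selfpow q b"
    using bound[of t k q] by (simp add: mult.assoc)
qed (use assms in auto)

theorem theorem5p1:
  fixes n :: nat
  shows "(\<forall>k. v_fun n k \<in> gelfand_shilov (1 / (2 * real n + 2)) ((2 * real n + 1) / (2 * real n + 2)))
       \<and> (\<exists>Cv > 0. \<forall>k \<alpha> \<beta> (t::real).
            \<bar>t ^ \<alpha> * (deriv ^^ \<beta>) (v_fun n k) t\<bar>
              \<le> Cv ^ (k + \<alpha> + \<beta> + 1) * fact \<alpha> powr (1 / (2 * real n + 2))
                 * fact \<beta> powr ((2 * real n + 1) / (2 * real n + 2)))"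
proof
  define Cv where "Cv = exp (14 * real n + 17)"
  have Cv: "0 < Cv"
    by (simp add: Cv_def)
  have estimate: "\<bar>t ^ \<alpha> * (deriv ^^ \<beta>) (v_fun n k) t\<bar> \<le> Cv ^ (k + \<alpha> + \<beta> + 1)
      * (fact \<alpha> powr (1 / (2 * real n + 2)) * fact \<beta> powr ((2 * real n + 1) / (2 * real n + 2)))"
    for k \<alpha> \<beta> and t :: real
    unfolding Cv_def by (rule abs_pow_mult_higher_deriv_v_fun_le)
  show "\<forall>k. v_fun n k \<in> gelfand_shilov (1 / (2 * real n + 2)) ((2 * real n + 1) / (2 * real n + 2))"
  proof
    fix k
    show "v_fun n k \<in> gelfand_shilov (1 / (2 * real n + 2)) ((2 * real n + 1) / (2 * real n + 2))"
    proof (rule gelfand_shilovI[where C = "Cv ^ (k + 1)" and A = Cv and B = Cv])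
      show "\<bar>t ^ \<alpha> * (deriv ^^ \<beta>) (v_fun n k) t\<bar> \<le> Cv ^ (k + 1) * Cv ^ \<alpha> * Cv ^ \<beta>
          * (fact \<alpha> powr (1 / (2 * real n + 2)) * fact \<beta> powr ((2 * real n + 1) / (2 * real n + 2)))"
        for \<alpha> \<beta> and t :: real
        using estimate[of t \<alpha> \<beta> k] by (simp add: power_add mult_ac)
    qed (use Cv smooth_real_v_fun in auto)
  qed
  show "\<exists>Cv > 0. \<forall>k \<alpha> \<beta> (t::real). \<bar>t ^ \<alpha> * (deriv ^^ \<beta>) (v_fun n k) t\<bar>
      \<le> Cv ^ (k + \<alpha> + \<beta> + 1) * fact \<alpha> powr (1 / (2 * real n + 2))
         * fact \<beta> powr ((2 * real n + 1) / (2 * real n + 2))"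
    using Cv estimate by (auto simp: mult.assoc)
qed

end
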